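(* Let $p$ be a prime and $b$ an integer with $\frac{p-1}{2}<b<p$ and $(p-b)(p-b^{-1})=2p+1$. Set $\alpha=\frac{p-b^{-1}+1}{2}$ and $\beta=\frac{p-b+1}{2}$. Then $|\mathrm{inv}_{1,b}|=5$, so $R=\mathbb{C}[y_0,\dots,y_4]$, and $$\ker\varphi_{1,b}=\langle y_2^2-y_1y_3,\ y_1^{\alpha-1}y_2-y_0y_3,\ y_3^{\beta}-y_2y_4,\ y_1^{\alpha}-y_0y_2,\ y_2y_3^{\beta-1}-y_1y_4,\ y_1^{\alpha-1}y_3^{\beta-1}-y_0y_4\rangle.$$
   Context: Let $S=\mathbb{C}[x_1,x_2]$ (standard grading), $\zeta=e^{2\pi i/p}$, $G=\mathbb{Z}/p\mathbb{Z}=\langle\zeta\rangle$ acting on $S$ by $x_1\mapsto\zeta x_1$, $x_2\mapsto\zeta^bx_2$, with invariant ring $S^G_{1,b}$ (spanned by monomials $x_1^cx_2^d$ with $c+bd\equiv0\pmod p$). $\mathrm{inv}_{1,b}$ denotes the minimal set of monomial generators of $S^G_{1,b}$ as a $\mathbb{C}$-algebra: the nonconstant invariant monomials that are not a product of two nonconstant invariant monomials. Writing $\mathrm{inv}_{1,b}=\{z_0,\dots,z_n\}$ in lexicographic order with $x_1>x_2$ (decreasing exponent of $x_1$), $R=\mathbb{C}[y_0,\dots,y_n]$ with $\deg y_i=\deg z_i$, and $\varphi_{1,b}:R\to S^G_{1,b}$ is the $\mathbb{C}$-algebra map $y_i\mapsto z_i$. $b^{-1}$ is the unique integer $0<b^{-1}<p$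 with $bb^{-1}\equiv1\pmod p$. *)

theory Defs
  imports Complex_Main "HOL-Library.Poly_Mapping" "HOL-Library.Product_Lexorder" "HOL-Computational_Algebra.Primes"
begin

text \<open>S = C[x1,x2] is realised with x1 = Var 0, x2 = Var 1; R = C[y0..yn] with y_i = Var i.\<close>

type_synonym cpoly = "(nat \<Rightarrow>\<^sub>0 nat) \<Rightarrow>\<^sub>0 complex"

definition Var :: "nat \<Rightarrow> cpoly" where
  "Var i = Poly_Mapping.single (Poly_Mapping.single i 1) 1"

definition Cst :: "complex \<Rightarrow> cpoly" where
  "Cst c = Poly_Mapping.single 0 c"

definition eval_poly :: "(nat \<Rightarrow> cpoly) \<Rightarrow> cpoly \<Rightarrow> cpoly" where
  "eval_poly f P = (\<Sum>m\<in>Poly_Mapping.keys P. Cst (Poly_Mapping.lookup P m) * (\<Prod>i\<in>Poly_Mapping.keys m. f i ^ Poly_Mapping.lookup (m :: nat \<Rightarrow>\<^sub>0 nat) (i::nat)))"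

definition in_vars :: "nat \<Rightarrow> cpoly \<Rightarrow> bool" where
  "in_vars n P = (\<forall>m\<in>Poly_Mapping.keys P. Poly_Mapping.keys m \<subseteq> {..<n})"

definition ideal_in :: "nat \<Rightarrow> cpoly set \<Rightarrow> cpoly set" where
  "ideal_in n G = {\<Sum>g\<in>G. h g * g | h. \<forall>g\<in>G. in_vars n (h g)}"

text \<open>x1^c x2^d is invariant under x1 \<mapsto> \<zeta> x1, x2 \<mapsto> \<zeta>^b x2.\<close>
definition inv_mono :: "nat \<Rightarrow> int \<Rightarrow> nat \<times> nat \<Rightarrow> bool" where
  "inv_mono p b e = ((int (fst e) + b * int (snd e)) mod int p = 0)"

definition inv_gens :: "nat \<Rightarrow> int \<Rightarrow> (nat \<times> nat) set" where
  "inv_gens p b = {e. inv_mono p b e \<and> e \<noteq> (0,0) \<and>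
     \<not> (\<exists>e1 e2. inv_mono p b e1 \<and> inv_mono p b e2 \<and> e1 \<noteq> (0,0) \<and> e2 \<noteq> (0,0) \<and>
              fst e = fst e1 + fst e2 \<and> snd e = snd e1 + snd e2)}"

text \<open>z_0,...,z_n in lexicographic order with x1 > x2 (decreasing exponent of x1).\<close>
definition inv_list :: "nat \<Rightarrow> int \<Rightarrow> (nat \<times> nat) list" where
  "inv_list p b = rev (sorted_list_of_set (inv_gens p b))"

definition phi :: "nat \<Rightarrow> int \<Rightarrow> cpoly \<Rightarrow> cpoly" where
  "phi p b P = eval_poly (\<lambda>i. Var 0 ^ fst (inv_list p b ! i) * Var 1 ^ snd (inv_list p b ! i)) P"

definition ker_phi :: "nat \<Rightarrow> int \<Rightarrow> cpoly set" where
  "ker_phi p b = {P. in_vars (card (inv_gens p b)) P \<and> phi p b P = 0}"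

definition inv_modp :: "nat \<Rightarrow> int \<Rightarrow> int" where
  "inv_modp p b = (THE c. 0 < c \<and> c < int p \<and> (b * c) mod int p = 1)"

end

theory Submission
  imports Defs "HOL-Number_Theory.Cong"
begin

(* The hypotheses force p - b = 2 beta - 1,
   p - b^-1 = 2 alpha - 1 and p = 2 alpha beta - alpha - beta. An exponent (c, d) is invariant iff
   c is congruent to (p - b) d modulo p, and the five invariant exponents
     (p, 0), (2 beta - 1, 1), (beta, alpha), (1, 2 alpha - 1), (0, p)
   cut the quadrant into four cones, each spanned by a pair of determinant p. Hence every invariant
   exponent is a nonnegative integer combination of two consecutive ones, and exactly these five are
   indecomposable: for each of them some linear form is minimal at it among all five.

   For the kernel, each monomial y_i y_j with j >= i + 2 is the heavier term, for a suitable weight,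
   of one of the six binomials, so every monomial is congruent modulo the ideal to a cone monomial
   y_i^s y_(i+1)^t. Distinct cone monomials have distinct images in S, so an element of the kernel
   is congruent to zero. *)

section \<open>Substituting monomials into polynomials\<close>

lemma keys_add_nat: "Poly_Mapping.keys (m + n :: 'a \<Rightarrow>\<^sub>0 nat) = Poly_Mapping.keys m \<union> Poly_Mapping.keys n"
  by (auto simp: in_keys_iff lookup_add)

definition monomial :: "(nat \<Rightarrow>\<^sub>0 nat) \<Rightarrow> cpoly" where
  "monomial m = Poly_Mapping.single m 1"

definition subst_monomial :: "(nat \<Rightarrow> cpoly) \<Rightarrow> (nat \<Rightarrow>\<^sub>0 nat) \<Rightarrow> cpoly" where
  "subst_monomial f m = (\<Prod>i\<in>Poly_Mapping.keys m. f i ^ Poly_Mapping.lookup m i)"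

lemma monomial_add: "monomial (m + n) = monomial m * monomial n"
  by (simp add: monomial_def mult_single)

lemma monomial_0 [simp]: "monomial 0 = 1"
  by (simp add: monomial_def)

lemma monomial_inject [simp]: "monomial m = monomial n \<longleftrightarrow> m = n"
  by (metis monomial_def lookup_single_eq lookup_single_not_eq one_neq_zero)

lemma Var_eq_monomial: "Var i = monomial (Poly_Mapping.single i 1)"
  by (simp add: Var_def monomial_def)

lemma Var_power_eq_monomial: "Var i ^ k = monomial (Poly_Mapping.single i k)"
proof (induction k)
  case (Suc k)
  have "Poly_Mapping.single i (Suc k) = Poly_Mapping.single i 1 + Poly_Mapping.single i k"
    by (simp flip: single_add)
  then show ?case
    using Suc by (simp add: Var_def monomial_def mult_single)
qed simp

lemma single_eq_Cst_mult_monomial: "Poly_Mapping.single m c = Cst c * monomial m"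
  by (simp add: Cst_def monomial_def mult_single)

lemma Cst_0 [simp]: "Cst 0 = 0"
  by (simp add: Cst_def)

lemma Cst_add: "Cst (a + b) = Cst a + Cst b"
  by (simp add: Cst_def single_add)

lemma Cst_mult: "Cst (a * b) = Cst a * Cst b"
  by (simp add: Cst_def mult_single)

lemma poly_mapping_sum_single:
  "P = (\<Sum>m\<in>Poly_Mapping.keys P. Poly_Mapping.single m (Poly_Mapping.lookup P m))"
  by (rule poly_mapping_eqI) (simp add: lookup_sum lookup_single when_def in_keys_iff)

lemma subst_monomial_superset:
  assumes "finite S" "Poly_Mapping.keys m \<subseteq> S"
  shows "subst_monomial f m = (\<Prod>i\<in>S. f i ^ Poly_Mapping.lookup m i)"
  unfolding subst_monomial_def
  by (rule prod.mono_neutral_left) (use assms in \<open>auto simp: in_keys_iff\<close>)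

lemma subst_monomial_add: "subst_monomial f (m + n) = subst_monomial f m * subst_monomial f n"
proof -
  let ?S = "Poly_Mapping.keys m \<union> Poly_Mapping.keys n"
  have "subst_monomial f (m + n) = (\<Prod>i\<in>?S. f i ^ Poly_Mapping.lookup (m + n) i)"
    by (rule subst_monomial_superset) (simp_all add: keys_add)
  also have "\<dots> = (\<Prod>i\<in>?S. f i ^ Poly_Mapping.lookup m i) * (\<Prod>i\<in>?S. f i ^ Poly_Mapping.lookup n i)"
    by (simp add: lookup_add power_add prod.distrib)
  also have "\<dots> = subst_monomial f m * subst_monomial f n"
    by (simp add: subst_monomial_superset[of ?S])
  finally show ?thesis .
qed

lemma eval_poly_superset:
  assumes "finite S" "Poly_Mapping.keys P \<subseteq> S"
  shows "eval_poly f P = (\<Sum>m\<in>S. Cst (Poly_Mapping.lookup P m) * subst_monomial f m)"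
  unfolding eval_poly_def subst_monomial_def[symmetric]
  by (rule sum.mono_neutral_left) (use assms in \<open>auto simp: in_keys_iff\<close>)

lemma eval_poly_single: "eval_poly f (Poly_Mapping.single m c) = Cst c * subst_monomial f m"
  by (subst eval_poly_superset[of "{m}"]) auto

lemma eval_poly_add: "eval_poly f (P + Q) = eval_poly f P + eval_poly f Q"
proof -
  let ?S = "Poly_Mapping.keys P \<union> Poly_Mapping.keys Q"
  have "eval_poly f (P + Q) = (\<Sum>m\<in>?S. Cst (Poly_Mapping.lookup (P + Q) m) * subst_monomial f m)"
    by (rule eval_poly_superset) (simp_all add: keys_add)
  also have "\<dots> = eval_poly f P + eval_poly f Q"
    by (simp add: lookup_add Cst_add distrib_right sum.distrib eval_poly_superset[of ?S])
  finally show ?thesis .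
qed

lemma eval_poly_0 [simp]: "eval_poly f 0 = 0"
  by (simp add: eval_poly_def)

lemma eval_poly_sum: "eval_poly f (\<Sum>x\<in>A. g x) = (\<Sum>x\<in>A. eval_poly f (g x))"
  by (induction A rule: infinite_finite_induct) (simp_all add: eval_poly_add)

lemma eval_poly_mult: "eval_poly f (P * Q) = eval_poly f P * eval_poly f Q"
proof -
  let ?A = "Poly_Mapping.keys P" and ?B = "Poly_Mapping.keys Q"
  have "P * Q = (\<Sum>m\<in>?A. \<Sum>n\<in>?B.
      Poly_Mapping.single (m + n) (Poly_Mapping.lookup P m * Poly_Mapping.lookup Q n))"
    by (subst (1 2) poly_mapping_sum_single) (simp add: sum_product mult_single)
  then have "eval_poly f (P * Q) = (\<Sum>m\<in>?A. \<Sum>n\<in>?B.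
      Cst (Poly_Mapping.lookup P m) * subst_monomial f m * (Cst (Poly_Mapping.lookup Q n) * subst_monomial f n))"
    by (simp add: eval_poly_sum eval_poly_single Cst_mult subst_monomial_add mult_ac)
  also have "\<dots> = eval_poly f P * eval_poly f Q"
    by (simp add: sum_product eval_poly_def subst_monomial_def)
  finally show ?thesis .
qed

lemma eval_poly_diff: "eval_poly f (P - Q) = eval_poly f P - eval_poly f Q"
  using eval_poly_add[of f "P - Q" Q] by simp

lemma eval_poly_Cst: "eval_poly f (Cst c) = Cst c"
  by (simp add: Cst_def eval_poly_single subst_monomial_def)

lemma eval_poly_monomial: "eval_poly f (monomial m) = subst_monomial f m"
  by (simp add: monomial_def eval_poly_single Cst_def)

lemma Var_pair_eq_monomial:
  "Var 0 ^ c * Var 1 ^ d = monomial (Poly_Mapping.single 0 c + Poly_Mapping.single 1 d)"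
  by (simp add: Var_power_eq_monomial monomial_add)

lemma Var_pair_eq_iff:
  "Var 0 ^ c * Var 1 ^ d = Var 0 ^ c' * Var 1 ^ d' \<longleftrightarrow> c = c' \<and> d = d'"
proof
  assume "Var 0 ^ c * Var 1 ^ d = Var 0 ^ c' * Var 1 ^ d'"
  then have eq: "Poly_Mapping.single 0 c + Poly_Mapping.single 1 d
      = Poly_Mapping.single 0 c' + Poly_Mapping.single (1::nat) d'"
    by (simp only: Var_pair_eq_monomial monomial_inject)
  show "c = c' \<and> d = d'"
    using arg_cong[OF eq, of "\<lambda>m. Poly_Mapping.lookup m 0"] arg_cong[OF eq, of "\<lambda>m. Poly_Mapping.lookup m 1"]
    by (simp add: lookup_add lookup_single)
qed simp

lemma prod_Var_pair_power:
  "(\<Prod>i\<in>A. (Var 0 ^ c i * Var 1 ^ d i) ^ n i)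
     = Var 0 ^ (\<Sum>i\<in>A. n i * c i) * Var 1 ^ (\<Sum>i\<in>A. n i * d i)"
  by (induction A rule: infinite_finite_induct)
    (simp_all add: power_mult_distrib power_add power_mult mult_ac)

lemma consecutive_support:
  assumes "Poly_Mapping.keys m \<subseteq> {..<Suc (Suc n)}"
    and "\<forall>i\<in>Poly_Mapping.keys m. \<forall>j\<in>Poly_Mapping.keys m. j < i + 2"
  shows "\<exists>i<Suc n. m = Poly_Mapping.single i (Poly_Mapping.lookup m i)
                        + Poly_Mapping.single (Suc i) (Poly_Mapping.lookup m (Suc i))"
proof (cases "m = 0")
  case True
  then show ?thesis by auto
next
  case False
  define i where "i = min (Min (Poly_Mapping.keys m)) n"
  have keys: "Poly_Mapping.keys m \<subseteq> {i, Suc i}"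
  proof
    fix j assume j: "j \<in> Poly_Mapping.keys m"
    have "Min (Poly_Mapping.keys m) \<in> Poly_Mapping.keys m" "Min (Poly_Mapping.keys m) \<le> j"
      using False j by simp_all
    with assms j have "Min (Poly_Mapping.keys m) \<le> j" "j < Min (Poly_Mapping.keys m) + 2" "j < Suc (Suc n)"
      by auto
    then have "j = i \<or> j = Suc i"
      unfolding i_def by arith
    then show "j \<in> {i, Suc i}" by blast
  qed
  have "m = Poly_Mapping.single i (Poly_Mapping.lookup m i)
         + Poly_Mapping.single (Suc i) (Poly_Mapping.lookup m (Suc i))"
    by (rule poly_mapping_eqI) (use keys in \<open>auto simp: lookup_add lookup_single when_def in_keys_iff\<close>)
  moreover have "i < Suc n"
    by (simp add: i_def)
  ultimately show ?thesis by blast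
qed

section \<open>Ideals and kernels of substitutions\<close>

lemma in_vars_add: "in_vars n P \<Longrightarrow> in_vars n Q \<Longrightarrow> in_vars n (P + Q)"
  unfolding in_vars_def using keys_add[of P Q] by blast

lemma in_vars_uminus: "in_vars n P \<Longrightarrow> in_vars n (- P)"
  by (simp add: in_vars_def keys_minus)

lemma in_vars_diff: "in_vars n P \<Longrightarrow> in_vars n Q \<Longrightarrow> in_vars n (P - Q)"
  using in_vars_add[of n P "- Q"] in_vars_uminus[of n Q] by simp

lemma in_vars_mult:
  assumes "in_vars n P" "in_vars n Q"
  shows "in_vars n (P * Q)"
  unfolding in_vars_def
proof
  fix m assume "m \<in> Poly_Mapping.keys (P * Q)"
  then obtain u v where "m = u + v" "u \<in> Poly_Mapping.keys P" "v \<in> Poly_Mapping.keys Q"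
    using keys_mult[of P Q] by blast
  then show "Poly_Mapping.keys m \<subseteq> {..<n}"
    using assms keys_add[of u v] unfolding in_vars_def by blast
qed

lemma in_vars_Cst: "in_vars n (Cst c)"
  by (simp add: in_vars_def Cst_def)

lemma in_vars_monomial: "Poly_Mapping.keys m \<subseteq> {..<n} \<Longrightarrow> in_vars n (monomial m)"
  by (simp add: in_vars_def monomial_def)

lemma in_vars_sum: "(\<And>x. x \<in> A \<Longrightarrow> in_vars n (g x)) \<Longrightarrow> in_vars n (\<Sum>x\<in>A. g x)"
  by (induction A rule: infinite_finite_induct) (auto intro: in_vars_add simp: in_vars_def[of _ 0])

lemma ideal_in_0: "0 \<in> ideal_in n G"
  unfolding ideal_in_def by (auto intro: exI[of _ "\<lambda>_. 0"] simp: in_vars_def)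

lemma ideal_in_add:
  assumes "P \<in> ideal_in n G" "Q \<in> ideal_in n G"
  shows "P + Q \<in> ideal_in n G"
proof -
  obtain h h' where "P = (\<Sum>g\<in>G. h g * g)" "Q = (\<Sum>g\<in>G. h' g * g)"
    and "\<forall>g\<in>G. in_vars n (h g) \<and> in_vars n (h' g)"
    using assms unfolding ideal_in_def by blast
  then show ?thesis
    unfolding ideal_in_def
    by (auto intro!: exI[of _ "\<lambda>g. h g + h' g"] simp: distrib_right sum.distrib in_vars_add)
qed

lemma ideal_in_mult:
  assumes "P \<in> ideal_in n G" "in_vars n R"
  shows "R * P \<in> ideal_in n G"
proof -
  obtain h where "P = (\<Sum>g\<in>G. h g * g)" "\<forall>g\<in>G. in_vars n (h g)"
    using assms(1) unfolding ideal_in_def by blast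
  then show ?thesis
    unfolding ideal_in_def using assms(2)
    by (auto intro!: exI[of _ "\<lambda>g. R * h g"] simp: sum_distrib_left in_vars_mult mult.assoc)
qed

lemma ideal_in_uminus: "P \<in> ideal_in n G \<Longrightarrow> - P \<in> ideal_in n G"
  using ideal_in_mult[of P n G "- 1"] by (simp add: in_vars_uminus in_vars_def)

lemma ideal_in_sum: "(\<And>x. x \<in> A \<Longrightarrow> g x \<in> ideal_in n G) \<Longrightarrow> (\<Sum>x\<in>A. g x) \<in> ideal_in n G"
  by (induction A rule: infinite_finite_induct) (simp_all add: ideal_in_0 ideal_in_add)

lemma ideal_in_generator:
  assumes "finite G" "g \<in> G"
  shows "g \<in> ideal_in n G"
proof -
  have "(\<Sum>g'\<in>G. (if g' = g then 1 else 0) * g') = (\<Sum>g'\<in>G. if g' = g then g' else 0)"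
    by (rule sum.cong) auto
  then have "g = (\<Sum>g'\<in>G. (if g' = g then 1 else 0) * g')"
    using assms by simp
  then show ?thesis
    unfolding ideal_in_def
    by (auto intro!: exI[of _ "\<lambda>g'. if g' = g then 1 else 0"] simp: in_vars_def split: if_split_asm)
qed

lemma ideal_in_subset_kernel:
  assumes "\<And>g. g \<in> G \<Longrightarrow> in_vars n g \<and> eval_poly f g = 0"
  shows "ideal_in n G \<subseteq> {P. in_vars n P \<and> eval_poly f P = 0}"
  using assms unfolding ideal_in_def
  by (auto intro!: in_vars_sum in_vars_mult simp: eval_poly_sum eval_poly_mult)

lemma monomial_reduces_to_normal_form:
  fixes w :: "(nat \<Rightarrow>\<^sub>0 nat) \<Rightarrow> nat"
  assumes w_add: "\<And>m m'. w (m + m') = w m + w m'"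
    and step: "\<And>m. Poly_Mapping.keys m \<subseteq> {..<n} \<Longrightarrow> m \<notin> N \<Longrightarrow>
      \<exists>r u v. m = r + u \<and> Poly_Mapping.keys v \<subseteq> {..<n} \<and> w v < w u \<and>
        monomial u - monomial v \<in> ideal_in n G"
    and "Poly_Mapping.keys m \<subseteq> {..<n}"
  shows "\<exists>m'\<in>N. monomial m - monomial m' \<in> ideal_in n G"
  using assms(3)
proof (induction "w m" arbitrary: m rule: less_induct)
  case less
  show ?case
  proof (cases "m \<in> N")
    case True
    then show ?thesis using ideal_in_0 by force
  next
    case False
    then obtain r u v where m: "m = r + u" and v: "Poly_Mapping.keys v \<subseteq> {..<n}"
      and decr: "w v < w u" and uv: "monomial u - monomial v \<in> ideal_in n G"
      using step less.prems by blast
    have "Poly_Mapping.keys r \<subseteq> Poly_Mapping.keys m"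
      by (auto simp: m in_keys_iff lookup_add)
    with less.prems have r: "Poly_Mapping.keys r \<subseteq> {..<n}"
      by blast
    have "w (r + v) < w m" and "Poly_Mapping.keys (r + v) \<subseteq> {..<n}"
      using decr r v keys_add[of r v] by (auto simp: m w_add)
    then obtain m' where "m' \<in> N" and "monomial (r + v) - monomial m' \<in> ideal_in n G"
      using less.hyps by blast
    moreover have "monomial m - monomial (r + v) \<in> ideal_in n G"
      using ideal_in_mult[OF uv in_vars_monomial[OF r]]
      by (simp add: m monomial_add right_diff_distrib)
    ultimately show ?thesis
      using ideal_in_add by fastforce
  qed
qed

lemma sum_single_eq_0_if_inj_on:
  fixes c :: "'a \<Rightarrow> 'c::comm_monoid_add"
  assumes inj: "inj_on E N" and h: "\<And>x. x \<in> A \<Longrightarrow> h x \<in> N"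
    and image: "(\<Sum>x\<in>A. Poly_Mapping.single (E (h x)) (c x)) = 0"
  shows "(\<Sum>x\<in>A. Poly_Mapping.single (h x) (c x)) = 0"
proof (rule poly_mapping_eqI)
  fix n
  have lookup: "Poly_Mapping.lookup (\<Sum>x\<in>A. Poly_Mapping.single (h x) (c x)) n
      = (\<Sum>x\<in>A. if h x = n then c x else 0)"
    by (simp add: lookup_sum lookup_single when_def)
  show "Poly_Mapping.lookup (\<Sum>x\<in>A. Poly_Mapping.single (h x) (c x)) n = Poly_Mapping.lookup 0 n"
  proof (cases "n \<in> N")
    case True
    then have "(\<Sum>x\<in>A. if h x = n then c x else 0) = (\<Sum>x\<in>A. if E (h x) = E n then c x else 0)"
      using inj h by (intro sum.cong) (auto dest: inj_onD)
    also have "\<dots> = Poly_Mapping.lookup (\<Sum>x\<in>A. Poly_Mapping.single (E (h x)) (c x)) (E n)"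
      by (simp add: lookup_sum lookup_single when_def)
    finally show ?thesis
      using image lookup by simp
  next
    case False
    with h have "(\<Sum>x\<in>A. if h x = n then c x else 0) = 0"
      by (intro sum.neutral) auto
    with lookup show ?thesis
      by simp
  qed
qed

text \<open>A kernel element P is congruent to the combination Q of normal monomials obtained by
  reducing each of its monomials; the image of Q lists the coefficients of Q at pairwise
  distinct monomials, so Q = 0.\<close>
lemma kernel_subset_ideal_in:
  assumes gens: "\<And>g. g \<in> G \<Longrightarrow> in_vars n g \<and> eval_poly f g = 0"
    and reduce: "\<And>m. Poly_Mapping.keys m \<subseteq> {..<n} \<Longrightarrow> \<exists>m'\<in>N. monomial m - monomial m' \<in> ideal_in n G"
    and image: "\<And>m. m \<in> N \<Longrightarrow> \<exists>e. eval_poly f (monomial m) = monomial e"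
    and inj: "inj_on (\<lambda>m. eval_poly f (monomial m)) N"
    and P: "in_vars n P" "eval_poly f P = 0"
  shows "P \<in> ideal_in n G"
proof -
  obtain nf where nf: "\<And>m. m \<in> Poly_Mapping.keys P \<Longrightarrow>
      nf m \<in> N \<and> monomial m - monomial (nf m) \<in> ideal_in n G"
    using reduce P(1) unfolding in_vars_def by metis
  obtain E where E: "\<And>m. m \<in> N \<Longrightarrow> eval_poly f (monomial m) = monomial (E m)"
    using image by metis
  have "inj_on E N"
  proof (rule inj_onI)
    fix x y
    assume "x \<in> N" "y \<in> N" "E x = E y"
    then have "eval_poly f (monomial x) = eval_poly f (monomial y)"
      by (simp add: E)
    then show "x = y"
      using inj_onD[OF inj] \<open>x \<in> N\<close> \<open>y \<in> N\<close> by blast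
  qed
  define Q where "Q = (\<Sum>m\<in>Poly_Mapping.keys P. Poly_Mapping.single (nf m) (Poly_Mapping.lookup P m))"
  have "P - Q = (\<Sum>m\<in>Poly_Mapping.keys P. Cst (Poly_Mapping.lookup P m) * (monomial m - monomial (nf m)))"
    unfolding Q_def
    by (subst (1) poly_mapping_sum_single)
      (simp add: sum_subtractf single_eq_Cst_mult_monomial right_diff_distrib)
  then have PQ: "P - Q \<in> ideal_in n G"
    using nf by (auto intro!: ideal_in_sum ideal_in_mult in_vars_Cst)
  moreover have "ideal_in n G \<subseteq> {P. in_vars n P \<and> eval_poly f P = 0}"
    using gens by (rule ideal_in_subset_kernel)
  ultimately have "eval_poly f Q = 0"
    using P(2) by (auto simp: eval_poly_diff)
  moreover have "eval_poly f Q
      = (\<Sum>m\<in>Poly_Mapping.keys P. Poly_Mapping.single (E (nf m)) (Poly_Mapping.lookup P m))"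
    unfolding Q_def eval_poly_sum
    by (intro sum.cong refl) (simp add: single_eq_Cst_mult_monomial eval_poly_mult eval_poly_Cst E nf)
  ultimately have "Q = 0"
    unfolding Q_def using nf
    by (intro sum_single_eq_0_if_inj_on[OF \<open>inj_on E N\<close>, of "Poly_Mapping.keys P" nf]) simp_all
  with PQ show ?thesis
    by simp
qed

section \<open>Lattice cones in the plane\<close>

definition det2 :: "nat \<times> nat \<Rightarrow> nat \<times> nat \<Rightarrow> int" where
  "det2 u w = int (fst u) * int (snd w) - int (snd u) * int (fst w)"

lemma det2_self: "det2 u u = 0"
  by (simp add: det2_def)

lemma det2_swap: "det2 w u = - det2 u w"
  by (simp add: det2_def)

text \<open>Cramer's rule in the lattice spanned by u and w.\<close>
lemma cone_coordinates:
  assumes det: "det2 u w = int p" and "0 < p"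
    and "int p dvd det2 e w" "int p dvd det2 u e" "0 \<le> det2 e w" "0 \<le> det2 u e"
  shows "\<exists>s t. e = (s * fst u + t * fst w, s * snd u + t * snd w)"
proof -
  obtain S T where S: "det2 e w = int p * S" and T: "det2 u e = int p * T"
    using assms(3,4) by (auto elim!: dvdE)
  have "0 \<le> S" "0 \<le> T"
    using S T assms(2,5,6) by (simp_all add: zero_le_mult_iff)
  have "det2 u w * int (fst e) = det2 e w * int (fst u) + det2 u e * int (fst w)"
    and "det2 u w * int (snd e) = det2 e w * int (snd u) + det2 u e * int (snd w)"
    by (simp_all add: det2_def algebra_simps)
  then have "int p * int (fst e) = int p * (S * int (fst u) + T * int (fst w))"
    and "int p * int (snd e) = int p * (S * int (snd u) + T * int (snd w))"
    by (simp_all add: det S T algebra_simps)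
  then have "int (fst e) = S * int (fst u) + T * int (fst w)"
    and "int (snd e) = S * int (snd u) + T * int (snd w)"
    using assms(2) by simp_all
  moreover obtain s t :: nat where "S = int s" "T = int t"
    using \<open>0 \<le> S\<close> \<open>0 \<le> T\<close> by (metis nonneg_int_cases)
  ultimately have "e = (s * fst u + t * fst w, s * snd u + t * snd w)"
    by (simp add: prod_eq_iff flip: of_nat_mult of_nat_add)
  then show ?thesis by blast
qed

lemma dvd_det2_if_congruent:
  assumes "m dvd int (fst u) - q * int (snd u)" "m dvd int (fst e) - q * int (snd e)"
  shows "m dvd det2 u e"
proof -
  have "det2 u e = (int (fst u) - q * int (snd u)) * int (snd e) - int (snd u) * (int (fst e) - q * int (snd e))"
    by (simp add: det2_def algebra_simps)
  then show ?thesis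
    using assms by simp
qed

lemma sign_change_index:
  fixes f :: "nat \<Rightarrow> int"
  assumes "0 < n" "0 \<le> f 0" "f n \<le> 0"
  shows "\<exists>i<n. 0 \<le> f i \<and> f (Suc i) \<le> 0"
  using assms
proof (induction n)
  case (Suc n)
  show ?case
  proof (cases "0 \<le> f n")
    case True
    with Suc.prems show ?thesis by auto
  next
    case False
    with Suc.prems(2) have "0 < n"
      by (cases n) auto
    with Suc False obtain i where "i < n" "0 \<le> f i" "f (Suc i) \<le> 0"
      by auto
    then show ?thesis
      by (auto intro: less_SucI)
  qed
qed simp

section \<open>The invariant monoid\<close>

lemma less_5_cases: "i < (5::nat) \<Longrightarrow> i = 0 \<or> i = 1 \<or> i = 2 \<or> i = 3 \<or> i = 4"
  by auto

text \<open>The parameters are a = \<alpha> - 3 and k = \<beta> - 2, which keeps every exponent free of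
  subtraction.\<close>
locale five_generators =
  fixes a k :: nat
begin

definition modulus :: nat where
  "modulus = 2 * a * k + 3 * a + 5 * k + 7"

definition twist :: int where
  "twist = int modulus - (2 * int k + 3)"

definition gens :: "(nat \<times> nat) list" where
  "gens = [(modulus, 0), (2 * k + 3, 1), (k + 2, a + 3), (1, 2 * a + 5), (0, modulus)]"

abbreviation z :: "nat \<Rightarrow> nat \<times> nat" where
  "z i \<equiv> gens ! i"

definition comb :: "nat \<Rightarrow> nat \<Rightarrow> nat \<Rightarrow> nat \<times> nat" where
  "comb i s t = (s * fst (z i) + t * fst (z (Suc i)), s * snd (z i) + t * snd (z (Suc i)))"

lemma inv_mono_iff_dvd:
  "inv_mono modulus twist e \<longleftrightarrow> int modulus dvd int (fst e) - int (2 * k + 3) * int (snd e)"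
proof -
  have "int (fst e) + twist * int (snd e)
      = (int (fst e) - int (2 * k + 3) * int (snd e)) + int modulus * int (snd e)"
    by (simp add: twist_def algebra_simps)
  then show ?thesis
    unfolding inv_mono_def mod_eq_0_iff_dvd by (metis dvd_add_left_iff dvd_triv_left)
qed

lemma inv_mono_gens:
  assumes "i < 5"
  shows "inv_mono modulus twist (z i)"
proof -
  have "int (fst (z i)) - int (2 * k + 3) * int (snd (z i)) = int modulus * [1, 0, -1, -2, - int (2 * k + 3)] ! i"
    using less_5_cases[OF assms] by (auto simp: gens_def modulus_def algebra_simps)
  then show ?thesis
    unfolding inv_mono_iff_dvd by simp
qed

lemma modulus_pos: "0 < modulus"
  by (simp add: modulus_def)

lemma length_gens: "length gens = 5"
  by (simp add: gens_def)

lemma det2_gens_consecutive: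
  assumes "i < 4"
  shows "det2 (z i) (z (Suc i)) = int modulus"
proof -
  have "i = 0 \<or> i = 1 \<or> i = 2 \<or> i = 3"
    using assms by auto
  then show ?thesis
    by (auto simp: det2_def gens_def modulus_def algebra_simps)
qed

lemma inv_mono_comb:
  assumes "i < 4"
  shows "inv_mono modulus twist (comb i s t)"
proof -
  let ?r = "\<lambda>e. int (fst e) - int (2 * k + 3) * int (snd e)"
  have "?r (comb i s t) = int s * ?r (z i) + int t * ?r (z (Suc i))"
    by (simp add: comb_def algebra_simps)
  moreover have "int modulus dvd ?r (z i)" "int modulus dvd ?r (z (Suc i))"
    using inv_mono_gens[of i] inv_mono_gens[of "Suc i"] assms by (simp_all add: inv_mono_iff_dvd)
  ultimately show ?thesis
    unfolding inv_mono_iff_dvd by simp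
qed

text \<open>The sign of det2 (z j) e changes between two consecutive generators; their determinant is
  the modulus, the index of the lattice of invariant exponents, so Cramer's rule gives
  nonnegative integer coordinates.\<close>
lemma inv_mono_imp_comb:
  assumes "inv_mono modulus twist e"
  shows "\<exists>i<4. \<exists>s t. e = comb i s t"
proof -
  define f where "f j = det2 (z j) e" for j
  have "0 \<le> f 0" "f 4 \<le> 0"
    by (simp_all add: f_def det2_def gens_def)
  then obtain i where i: "i < 4" "0 \<le> f i" "f (Suc i) \<le> 0"
    using sign_change_index[of 4 f] by auto
  have dvd: "int modulus dvd det2 u v" if "inv_mono modulus twist u" "inv_mono modulus twist v" for u v
    using that by (intro dvd_det2_if_congruent) (simp_all add: inv_mono_iff_dvd)
  have "int modulus dvd det2 e (z (Suc i))" "int modulus dvd det2 (z i) e"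
    using i(1) by (simp_all add: dvd assms inv_mono_gens)
  moreover have "det2 e (z (Suc i)) = - f (Suc i)"
    by (simp add: f_def det2_def)
  ultimately have "\<exists>s t. e = (s * fst (z i) + t * fst (z (Suc i)), s * snd (z i) + t * snd (z (Suc i)))"
    using i modulus_pos by (intro cone_coordinates[OF det2_gens_consecutive[OF i(1)]]) (simp_all add: f_def)
  with i show ?thesis
    unfolding comb_def by blast
qed

lemma comb_eq_0_iff:
  assumes "i < 4"
  shows "comb i s t = (0, 0) \<longleftrightarrow> s = 0 \<and> t = 0"
proof -
  have "0 < fst (z j) + snd (z j)" if "j < 5" for j
    using less_5_cases[OF that] by (auto simp: gens_def modulus_def)
  then have "0 < fst (z i) + snd (z i)" "0 < fst (z (Suc i)) + snd (z (Suc i))"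
    using assms by simp_all
  moreover have "fst (comb i s t) + snd (comb i s t)
      = s * (fst (z i) + snd (z i)) + t * (fst (z (Suc i)) + snd (z (Suc i)))"
    by (simp add: comb_def algebra_simps)
  ultimately show ?thesis
    by (auto simp: comb_def)
qed

text \<open>For each generator z j a linear form that is minimal at z j among all generators
  (a supporting line of the convex hull of the nonzero invariant exponents).\<close>
definition support :: "nat \<Rightarrow> nat \<times> nat" where
  "support j = [(1, modulus), (1, k + 2), (a + 2, k + 1), (a + 2, 1), (modulus, 1)] ! j"

definition height :: "nat \<Rightarrow> nat \<times> nat \<Rightarrow> nat" where
  "height j e = fst (support j) * fst e + snd (support j) * snd e"

lemma height_gens_min: "j < 5 \<Longrightarrow> i < 5 \<Longrightarrow> height j (z j) \<le> height j (z i)"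
  by (auto dest!: less_5_cases simp: height_def support_def gens_def modulus_def algebra_simps)

lemma height_gens_pos: "j < 5 \<Longrightarrow> 0 < height j (z j)"
  by (auto dest!: less_5_cases simp: height_def support_def gens_def modulus_def)

lemma height_add:
  "fst e = fst e1 + fst e2 \<Longrightarrow> snd e = snd e1 + snd e2 \<Longrightarrow> height j e = height j e1 + height j e2"
  by (simp add: height_def algebra_simps)

lemma height_inv_mono_ge:
  assumes "j < 5" "inv_mono modulus twist e" "e \<noteq> (0, 0)"
  shows "height j (z j) \<le> height j e"
proof -
  obtain i s t where i: "i < 4" and e: "e = comb i s t"
    using inv_mono_imp_comb[OF assms(2)] by blast
  with assms(3) have "1 \<le> s + t"
    by (auto simp: comb_eq_0_iff)
  then have "height j (z j) \<le> s * height j (z j) + t * height j (z j)"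
    by (simp add: add_mult_distrib[symmetric])
  also have "\<dots> \<le> s * height j (z i) + t * height j (z (Suc i))"
    using height_gens_min[OF assms(1)] i by (simp add: add_mono)
  also have "\<dots> = height j e"
    by (simp add: e comb_def height_def algebra_simps)
  finally show ?thesis .
qed

lemma gens_subset_inv_gens: "set gens \<subseteq> inv_gens modulus twist"
proof
  fix e assume "e \<in> set gens"
  then obtain j where j: "j < 5" and e: "e = z j"
    by (auto simp: in_set_conv_nth length_gens)
  have "e \<noteq> (0, 0)"
    using less_5_cases[OF j] by (auto simp: e gens_def modulus_def)
  moreover have "\<not> (\<exists>e1 e2. inv_mono modulus twist e1 \<and> inv_mono modulus twist e2 \<and>
      e1 \<noteq> (0, 0) \<and> e2 \<noteq> (0, 0) \<and> fst e = fst e1 + fst e2 \<and> snd e = snd e1 + snd e2)"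
  proof (intro notI, elim exE conjE)
    fix e1 e2
    assume inv: "inv_mono modulus twist e1" "inv_mono modulus twist e2"
      and nz: "e1 \<noteq> (0, 0)" "e2 \<noteq> (0, 0)"
      and sum: "fst e = fst e1 + fst e2" "snd e = snd e1 + snd e2"
    have "height j (z j) = height j e1 + height j e2"
      using height_add[OF sum, of j] e by simp
    then show False
      using height_inv_mono_ge[OF j inv(1) nz(1)] height_inv_mono_ge[OF j inv(2) nz(2)]
        height_gens_pos[OF j] by linarith
  qed
  ultimately show "e \<in> inv_gens modulus twist"
    unfolding inv_gens_def using inv_mono_gens[OF j] e by blast
qed

lemma inv_gens_subset_gens: "inv_gens modulus twist \<subseteq> set gens"
proof
  fix e assume e: "e \<in> inv_gens modulus twist"
  then obtain i s t where i: "i < 4" and est: "e = comb i s t"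
    using inv_mono_imp_comb unfolding inv_gens_def by blast
  have decomposable: False
    if "s = s1 + s2" "t = t1 + t2" "0 < s1 + t1" "0 < s2 + t2" for s1 s2 t1 t2
  proof -
    have "fst e = fst (comb i s1 t1) + fst (comb i s2 t2)" "snd e = snd (comb i s1 t1) + snd (comb i s2 t2)"
      by (simp_all add: est that comb_def algebra_simps)
    moreover have "comb i s1 t1 \<noteq> (0, 0)" "comb i s2 t2 \<noteq> (0, 0)"
      using that by (simp_all add: comb_eq_0_iff[OF i])
    ultimately show False
      using e inv_mono_comb[OF i] unfolding inv_gens_def by blast
  qed
  have "0 < s + t"
    using e by (auto simp: inv_gens_def est comb_eq_0_iff[OF i])
  then have "(s, t) = (1, 0) \<or> (s, t) = (0, 1)"
    using decomposable[of 1 "s - 1" 0 t] decomposable[of 0 s 1 "t - 1"] by fastforce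
  then have "e = z i \<or> e = z (Suc i)"
    by (auto simp: est comb_def)
  with i show "e \<in> set gens"
    by (auto simp: length_gens)
qed

lemma inv_gens_eq: "inv_gens modulus twist = set gens"
  using gens_subset_inv_gens inv_gens_subset_gens by blast

lemma card_inv_gens: "card (inv_gens modulus twist) = 5"
  unfolding inv_gens_eq by (simp add: gens_def modulus_def)

lemma inv_list_eq: "inv_list modulus twist = gens"
proof -
  have "sorted (rev gens)" "distinct (rev gens)"
    by (simp_all add: gens_def modulus_def)
  then show ?thesis
    unfolding inv_list_def inv_gens_eq using sorted_list_of_set.idem_if_sorted_distinct[of "rev gens"]
    by simp
qed

section \<open>The kernel\<close>

definition embed :: "nat \<Rightarrow> cpoly" where
  "embed i = Var 0 ^ fst (z i) * Var 1 ^ snd (z i)"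

definition binomials :: "cpoly set" where
  "binomials =
    { Var 2 ^ 2 - Var 1 * Var 3,
      Var 1 ^ (a + 2) * Var 2 - Var 0 * Var 3,
      Var 3 ^ (k + 2) - Var 2 * Var 4,
      Var 1 ^ (a + 3) - Var 0 * Var 2,
      Var 2 * Var 3 ^ (k + 1) - Var 1 * Var 4,
      Var 1 ^ (a + 2) * Var 3 ^ (k + 1) - Var 0 * Var 4 }"

lemma binomials_eq_monomials:
  "binomials =
    { monomial (Poly_Mapping.single 2 2) - monomial (Poly_Mapping.single 1 1 + Poly_Mapping.single 3 1),
      monomial (Poly_Mapping.single 1 (a + 2) + Poly_Mapping.single 2 1)
        - monomial (Poly_Mapping.single 0 1 + Poly_Mapping.single 3 1),
      monomial (Poly_Mapping.single 3 (k + 2)) - monomial (Poly_Mapping.single 2 1 + Poly_Mapping.single 4 1),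
      monomial (Poly_Mapping.single 1 (a + 3)) - monomial (Poly_Mapping.single 0 1 + Poly_Mapping.single 2 1),
      monomial (Poly_Mapping.single 2 1 + Poly_Mapping.single 3 (k + 1))
        - monomial (Poly_Mapping.single 1 1 + Poly_Mapping.single 4 1),
      monomial (Poly_Mapping.single 1 (a + 2) + Poly_Mapping.single 3 (k + 1))
        - monomial (Poly_Mapping.single 0 1 + Poly_Mapping.single 4 1) }"
  unfolding binomials_def
  by (simp only: Var_power_eq_monomial) (simp only: Var_eq_monomial flip: monomial_add)

definition image_exp :: "(nat \<Rightarrow>\<^sub>0 nat) \<Rightarrow> nat \<times> nat" where
  "image_exp m = (\<Sum>i<5. Poly_Mapping.lookup m i * fst (z i), \<Sum>i<5. Poly_Mapping.lookup m i * snd (z i))"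

lemma image_exp_add:
  "image_exp (m + n) = (fst (image_exp m) + fst (image_exp n), snd (image_exp m) + snd (image_exp n))"
  by (simp add: image_exp_def lookup_add algebra_simps sum.distrib)

lemma image_exp_single: "i < 5 \<Longrightarrow> image_exp (Poly_Mapping.single i s) = (s * fst (z i), s * snd (z i))"
  by (simp add: image_exp_def lookup_single when_mult, simp add: when_def)

lemma eval_embed_monomial:
  assumes "Poly_Mapping.keys m \<subseteq> {..<5}"
  shows "eval_poly embed (monomial m) = Var 0 ^ fst (image_exp m) * Var 1 ^ snd (image_exp m)"
  unfolding eval_poly_monomial subst_monomial_superset[OF finite_lessThan assms] embed_def
    image_exp_def fst_conv snd_conv
  by (rule prod_Var_pair_power)

lemma finite_binomials: "finite binomials"
  by (simp add: binomials_def)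

lemma binomials_in_kernel:
  assumes "g \<in> binomials"
  shows "in_vars 5 g \<and> eval_poly embed g = 0"
proof -
  have binomial: "in_vars 5 (monomial v - monomial u) \<and> eval_poly embed (monomial v - monomial u) = 0"
    if "Poly_Mapping.keys u \<subseteq> {..<5}" "Poly_Mapping.keys v \<subseteq> {..<5}" "image_exp v = image_exp u" for u v
    using that
    by (simp add: in_vars_diff in_vars_monomial eval_poly_diff eval_embed_monomial)
  have "\<forall>g\<in>binomials. in_vars 5 g \<and> eval_poly embed g = 0"
    unfolding binomials_eq_monomials ball_simps
    by (intro conjI binomial TrueI)
      (simp_all add: keys_add_nat image_exp_add image_exp_single gens_def modulus_def algebra_simps)
  with assms show ?thesis by blast
qed

definition cone :: "nat \<Rightarrow> nat \<Rightarrow> nat \<Rightarrow> (nat \<Rightarrow>\<^sub>0 nat)" where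
  "cone i s t = Poly_Mapping.single i s + Poly_Mapping.single (Suc i) t"

definition cone_monomials :: "(nat \<Rightarrow>\<^sub>0 nat) set" where
  "cone_monomials = {cone i s t | i s t. i < 4}"

lemma keys_cone: "i < 4 \<Longrightarrow> Poly_Mapping.keys (cone i s t) \<subseteq> {..<5}"
  by (auto simp: cone_def keys_add_nat)

lemma image_exp_cone: "i < 4 \<Longrightarrow> image_exp (cone i s t) = comb i s t"
  by (simp add: cone_def comb_def image_exp_add image_exp_single)

lemma det2_gens_pos:
  assumes "r < l" "l < 5"
  shows "0 < det2 (z r) (z l)"
proof -
  have "snd (z r) * fst (z l) < fst (z r) * snd (z l)"
    using less_5_cases[of r] less_5_cases[of l] assms
    by (auto simp: gens_def modulus_def algebra_simps)
  then show ?thesis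
    by (simp add: det2_def flip: of_nat_mult)
qed

lemma det2_comb:
  "det2 (z r) (comb i s t) = int s * det2 (z r) (z i) + int t * det2 (z r) (z (Suc i))"
  by (simp add: det2_def comb_def algebra_simps)

lemma snd_gens_pos: "0 < l \<Longrightarrow> l < 5 \<Longrightarrow> 0 < snd (z l)"
  by (auto dest!: less_5_cases simp: gens_def modulus_def)

lemma comb_eq_same_cone:
  assumes "i < 4" and eq: "comb i s t = comb i s' t'"
  shows "s = s' \<and> t = t'"
proof -
  have "int t * det2 (z i) (z (Suc i)) = int t' * det2 (z i) (z (Suc i))"
    and "int s * det2 (z (Suc i)) (z i) = int s' * det2 (z (Suc i)) (z i)"
    using arg_cong[OF eq, of "det2 (z i)"] arg_cong[OF eq, of "det2 (z (Suc i))"]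
    by (simp_all add: det2_comb det2_self)
  then show ?thesis
    using det2_gens_pos[of i "Suc i"] det2_swap[of "z i" "z (Suc i)"] assms by simp
qed

text \<open>Pairing with the generator z (Suc i) separates the cone of z i, z (Suc i) from all
  later cones.\<close>
lemma comb_eq_later_cone:
  assumes "i < j" "j < 4" and eq: "comb i s t = comb j s' t'"
  shows "s = 0 \<and> t' = 0 \<and> (s' = 0 \<or> j = Suc i)"
proof -
  let ?D = "\<lambda>r l. det2 (z r) (z l)"
  have sum: "- (int s * ?D i (Suc i)) = int s' * ?D (Suc i) j + int t' * ?D (Suc i) (Suc j)"
    using arg_cong[OF eq, of "det2 (z (Suc i))"] det2_swap[of "z i" "z (Suc i)"]
    by (simp add: det2_comb det2_self)
  have pos: "0 < ?D i (Suc i)" "0 < ?D (Suc i) (Suc j)" and pos': "j \<noteq> Suc i \<Longrightarrow> 0 < ?D (Suc i) j"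
    using assms by (simp_all add: det2_gens_pos)
  then have "0 \<le> ?D (Suc i) j"
    by (cases "j = Suc i") (simp_all add: det2_self)
  with pos have "0 \<le> int s * ?D i (Suc i)" "0 \<le> int s' * ?D (Suc i) j" "0 \<le> int t' * ?D (Suc i) (Suc j)"
    by simp_all
  with sum have "int s * ?D i (Suc i) = 0" "int s' * ?D (Suc i) j = 0" "int t' * ?D (Suc i) (Suc j) = 0"
    by linarith+
  with pos pos' show ?thesis
    by auto
qed

lemma cone_eq_if_comb_eq:
  assumes "i \<le> j" "j < 4" and eq: "comb i s t = comb j s' t'"
  shows "cone i s t = cone j s' t'"
proof (cases "i = j")
  case True
  with comb_eq_same_cone[of j s t s' t'] assms show ?thesis
    by simp
next
  case False
  with assms have "s = 0" "t' = 0" and s': "s' = 0 \<or> j = Suc i"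
    using comb_eq_later_cone[of i j s t s' t'] by auto
  with eq have snd_eq: "t * snd (z (Suc i)) = s' * snd (z j)"
    by (simp add: comb_def)
  have "0 < snd (z (Suc i))"
    using assms by (simp add: snd_gens_pos)
  from s' show ?thesis
  proof
    assume "s' = 0"
    with snd_eq \<open>0 < snd (z (Suc i))\<close> have "t = 0"
      by simp
    with \<open>s = 0\<close> \<open>t' = 0\<close> \<open>s' = 0\<close> show ?thesis
      by (simp add: cone_def)
  next
    assume "j = Suc i"
    with snd_eq \<open>0 < snd (z (Suc i))\<close> have "t = s'"
      by simp
    with \<open>s = 0\<close> \<open>t' = 0\<close> \<open>j = Suc i\<close> show ?thesis
      by (simp add: cone_def)
  qed
qed

text \<open>A weight for which every binomial is strictly heavier on its term y i * y j with
  i + 2 \<le> j than on its other term.\<close>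
definition weight :: "(nat \<Rightarrow>\<^sub>0 nat) \<Rightarrow> nat" where
  "weight m = (\<Sum>i<5. Poly_Mapping.lookup m i * [2 * a + 6, 2, 1, 2, 2 * k + 4] ! i)"

lemma weight_add: "weight (m + n) = weight m + weight n"
  by (simp add: weight_def lookup_add algebra_simps sum.distrib)

lemma weight_single: "i < 5 \<Longrightarrow> weight (Poly_Mapping.single i s) = s * [2 * a + 6, 2, 1, 2, 2 * k + 4] ! i"
  by (simp add: weight_def lookup_single when_mult, simp add: when_def)

lemma binomial_for_gap:
  assumes "i + 2 \<le> j" "j < 5"
  defines "u \<equiv> Poly_Mapping.single i 1 + Poly_Mapping.single j 1"
  shows "\<exists>v. Poly_Mapping.keys v \<subseteq> {..<5} \<and> weight v < weight u \<and>
    monomial u - monomial v \<in> ideal_in 5 binomials"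
proof -
  have witness: "\<exists>v. Poly_Mapping.keys v \<subseteq> {..<5} \<and> weight v < weight u \<and>
      monomial u - monomial v \<in> ideal_in 5 binomials"
    if "monomial v - monomial u \<in> binomials" "Poly_Mapping.keys v \<subseteq> {..<5}" "weight v < weight u" for v
    using that ideal_in_uminus[OF ideal_in_generator[OF finite_binomials that(1)]] by auto
  consider "i = 0" "j = 2" | "i = 0" "j = 3" | "i = 0" "j = 4" | "i = 1" "j = 3" | "i = 1" "j = 4"
    | "i = 2" "j = 4"
    using assms(1,2) by linarith
  then show ?thesis
  proof cases
    case 1
    show ?thesis
      by (rule witness[of "Poly_Mapping.single 1 (a + 3)"])
        (auto simp: 1 u_def binomials_eq_monomials weight_add weight_single)
  next
    case 2
    show ?thesis
      by (rule witness[of "Poly_Mapping.single 1 (a + 2) + Poly_Mapping.single 2 1"])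
        (auto simp: 2 u_def binomials_eq_monomials keys_add_nat weight_add weight_single)
  next
    case 3
    show ?thesis
      by (rule witness[of "Poly_Mapping.single 1 (a + 2) + Poly_Mapping.single 3 (k + 1)"])
        (auto simp: 3 u_def binomials_eq_monomials keys_add_nat weight_add weight_single)
  next
    case 4
    show ?thesis
      by (rule witness[of "Poly_Mapping.single 2 2"])
        (auto simp: 4 u_def binomials_eq_monomials weight_add weight_single)
  next
    case 5
    show ?thesis
      by (rule witness[of "Poly_Mapping.single 2 1 + Poly_Mapping.single 3 (k + 1)"])
        (auto simp: 5 u_def binomials_eq_monomials keys_add_nat weight_add weight_single)
  next
    case 6
    show ?thesis
      by (rule witness[of "Poly_Mapping.single 3 (k + 2)"])
        (auto simp: 6 u_def binomials_eq_monomials weight_add weight_single)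
  qed
qed

lemma monomial_congruent_cone:
  assumes "Poly_Mapping.keys m \<subseteq> {..<5}"
  shows "\<exists>m'\<in>cone_monomials. monomial m - monomial m' \<in> ideal_in 5 binomials"
  using weight_add _ assms
proof (rule monomial_reduces_to_normal_form)
  fix m
  assume keys: "Poly_Mapping.keys m \<subseteq> {..<5}" and "m \<notin> cone_monomials"
  have "\<not> (\<forall>i\<in>Poly_Mapping.keys m. \<forall>j\<in>Poly_Mapping.keys m. j < i + 2)"
  proof
    assume "\<forall>i\<in>Poly_Mapping.keys m. \<forall>j\<in>Poly_Mapping.keys m. j < i + 2"
    moreover have "{..<Suc (Suc 3)} = {..<5::nat}"
      by simp
    ultimately obtain i where "i < 4" "m = cone i (Poly_Mapping.lookup m i) (Poly_Mapping.lookup m (Suc i))"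
      using consecutive_support[of m 3] keys by (auto simp: cone_def)
    with \<open>m \<notin> cone_monomials\<close> show False
      by (auto simp: cone_monomials_def)
  qed
  then obtain i j where ij: "i \<in> Poly_Mapping.keys m" "j \<in> Poly_Mapping.keys m" "i + 2 \<le> j"
    by (auto simp: not_less)
  define u where "u = Poly_Mapping.single i 1 + Poly_Mapping.single j (1::nat)"
  obtain v where "Poly_Mapping.keys v \<subseteq> {..<5}" "weight v < weight u"
    "monomial u - monomial v \<in> ideal_in 5 binomials"
    using binomial_for_gap[of i j] ij keys unfolding u_def by blast
  moreover have "m = (m - u) + u"
    using ij by (intro poly_mapping_eqI) (auto simp: u_def lookup_add lookup_minus lookup_single when_def in_keys_iff)
  ultimately show "\<exists>r u v. m = r + u \<and> Poly_Mapping.keys v \<subseteq> {..<5} \<and> weight v < weight u \<and>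
      monomial u - monomial v \<in> ideal_in 5 binomials"
    by blast
qed

lemma eval_embed_cone:
  "i < 4 \<Longrightarrow> eval_poly embed (monomial (cone i s t)) = Var 0 ^ fst (comb i s t) * Var 1 ^ snd (comb i s t)"
  by (simp add: eval_embed_monomial keys_cone image_exp_cone)

lemma inj_on_eval_embed_cone: "inj_on (\<lambda>m. eval_poly embed (monomial m)) cone_monomials"
proof (rule inj_onI)
  fix m m'
  assume "m \<in> cone_monomials" "m' \<in> cone_monomials"
    and eq: "eval_poly embed (monomial m) = eval_poly embed (monomial m')"
  then obtain i s t i' s' t' where i: "i < 4" "i' < 4" and m: "m = cone i s t" "m' = cone i' s' t'"
    by (auto simp: cone_monomials_def)
  with eq have "comb i s t = comb i' s' t'"
    by (simp only: eval_embed_cone Var_pair_eq_iff prod_eq_iff)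
  then show "m = m'"
    using cone_eq_if_comb_eq[of i i' s t s' t'] cone_eq_if_comb_eq[of i' i s' t' s t] i unfolding m
    by (cases "i \<le> i'") simp_all
qed

theorem kernel_eq_ideal_in: "{P. in_vars 5 P \<and> eval_poly embed P = 0} = ideal_in 5 binomials"
proof
  show "ideal_in 5 binomials \<subseteq> {P. in_vars 5 P \<and> eval_poly embed P = 0}"
    using binomials_in_kernel by (rule ideal_in_subset_kernel)
  have "\<exists>e. eval_poly embed (monomial m) = monomial e" if m: "m \<in> cone_monomials" for m
  proof -
    obtain i s t where i: "i < 4" and "m = cone i s t"
      using m by (auto simp: cone_monomials_def)
    then show ?thesis
      by (simp only: eval_embed_cone[OF i] Var_pair_eq_monomial) (rule exI, rule refl)
  qed
  then show "{P. in_vars 5 P \<and> eval_poly embed P = 0} \<subseteq> ideal_in 5 binomials"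
    using kernel_subset_ideal_in[OF binomials_in_kernel monomial_congruent_cone _ inj_on_eval_embed_cone]
    by blast
qed

end

section \<open>Reduction to the parameters a and k\<close>

lemma inv_modp_is_inverse:
  assumes p: "prime p" and b: "0 < b" "b < int p"
  shows "0 < inv_modp p b \<and> inv_modp p b < int p \<and> (b * inv_modp p b) mod int p = 1"
proof -
  have "1 < int p"
    using prime_gt_1_nat[OF p] by simp
  have "\<not> int p dvd b"
  proof
    assume "int p dvd b"
    with b show False
      using zdvd_imp_le by fastforce
  qed
  moreover have "prime (int p)"
    using p by simp
  ultimately have cop: "coprime b (int p)"
    using prime_imp_coprime coprime_commute by blast
  then obtain x where x: "[b * x = 1] (mod int p)"
    using cong_solve_coprime_int by blast
  let ?inverse = "\<lambda>c. 0 < c \<and> c < int p \<and> (b * c) mod int p = 1"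
  have "(b * (x mod int p)) mod int p = 1"
    using x \<open>1 < int p\<close> by (simp add: cong_def mod_mult_right_eq)
  moreover from this have "x mod int p \<noteq> 0"
    by auto
  moreover have "0 \<le> x mod int p" "x mod int p < int p"
    using \<open>1 < int p\<close> by simp_all
  ultimately have "?inverse (x mod int p)"
    by simp
  moreover have "c = x mod int p" if "?inverse c" for c
  proof -
    have "[b * c = b * (x mod int p)] (mod int p)"
      using that x by (simp add: cong_def mod_mult_right_eq)
    then have "[c = x mod int p] (mod int p)"
      by (simp add: cong_mult_lcancel[OF cop])
    then show ?thesis
      using that \<open>1 < int p\<close> by (intro cong_less_imp_eq_int[of _ "int p"]) simp_all
  qed
  ultimately have "?inverse (inv_modp p b)"
    unfolding inv_modp_def by (rule theI)
  then show ?thesis .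
qed

lemma odd_int_eq_twice_nat_plus:
  fixes u c :: int
  assumes "odd u" "odd c" "c \<le> u"
  shows "\<exists>k::nat. u = 2 * int k + c"
proof -
  have "even (u - c)"
    using assms(1,2) by simp
  then obtain r where "u - c = 2 * r"
    by (rule evenE)
  with assms(3) show ?thesis
    by (intro exI[of _ "nat r"]) simp
qed

lemma odd_factors_of_twice_plus_one:
  fixes u v n :: int
  assumes uv: "u * v = 2 * n + 1" and "0 < u" "2 * u \<le> n" "v < n"
  shows "\<exists>k a :: nat. u = 2 * int k + 3 \<and> v = 2 * int a + 5"
proof -
  have "0 < u * v" "odd (u * v)"
    using uv assms(2,3) by simp_all
  with \<open>0 < u\<close> have "0 < v" "odd u" "odd v"
    by (simp_all add: zero_less_mult_iff)
  have "u \<noteq> 1"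
    using uv \<open>2 * u \<le> n\<close> \<open>v < n\<close> by auto
  moreover obtain r where "u = 2 * r + 1"
    using \<open>odd u\<close> by (rule oddE)
  ultimately have "3 \<le> u"
    using \<open>0 < u\<close> by presburger
  have "v \<noteq> 1" "v \<noteq> 3"
    using uv \<open>2 * u \<le> n\<close> \<open>v < n\<close> by auto
  moreover obtain r' where "v = 2 * r' + 1"
    using \<open>odd v\<close> by (rule oddE)
  ultimately have "5 \<le> v"
    using \<open>0 < v\<close> by presburger
  show ?thesis
    using odd_int_eq_twice_nat_plus[OF \<open>odd u\<close> _ \<open>3 \<le> u\<close>] odd_int_eq_twice_nat_plus[OF \<open>odd v\<close> _ \<open>5 \<le> v\<close>]
    by auto
qed

lemma parameters_from_hypotheses:
  fixes p :: nat and b :: int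
  assumes "prime p" and "(real p - 1) / 2 < real_of_int b" and "b < int p"
    and "(int p - b) * (int p - inv_modp p b) = 2 * int p + 1"
  obtains a k where "p = five_generators.modulus a k" "b = five_generators.twist a k"
    "int p - inv_modp p b = 2 * int a + 5"
proof -
  define u v where "u = int p - b" and "v = int p - inv_modp p b"
  have "int p \<le> 2 * b"
    using assms(2) by (simp add: field_simps)
  then have "0 < b" "0 < u" "2 * u \<le> int p"
    using prime_gt_1_nat[OF assms(1)] assms(3) by (simp_all add: u_def)
  moreover have "v < int p"
    using inv_modp_is_inverse[OF assms(1) \<open>0 < b\<close> assms(3)] by (simp add: v_def)
  moreover have uv: "u * v = 2 * int p + 1"
    using assms(4) by (simp add: u_def v_def)
  ultimately obtain k a where k: "u = 2 * int k + 3" and a: "v = 2 * int a + 5"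
    using odd_factors_of_twice_plus_one by blast
  have "int p = int (five_generators.modulus a k)"
    using uv unfolding k a by (simp add: five_generators.modulus_def algebra_simps)
  then have "p = five_generators.modulus a k"
    by simp
  moreover have "b = five_generators.twist a k"
    using k by (simp add: u_def five_generators.twist_def flip: \<open>p = five_generators.modulus a k\<close>)
  ultimately show ?thesis
    using a that by (simp add: v_def)
qed

theorem proposition5p5:
  fixes p :: nat and b :: int
  assumes "prime p"
    and "(real p - 1) / 2 < real_of_int b" and "b < int p"
    and "(int p - b) * (int p - inv_modp p b) = 2 * int p + 1"
  shows "card (inv_gens p b) = 5 \<and>
    (let \<alpha> = nat ((int p - inv_modp p b + 1) div 2); \<beta> = nat ((int p - b + 1) div 2) in
     ker_phi p b = ideal_in 5
       { Var 2 ^ 2 - Var 1 * Var 3,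
         Var 1 ^ (\<alpha> - 1) * Var 2 - Var 0 * Var 3,
         Var 3 ^ \<beta> - Var 2 * Var 4,
         Var 1 ^ \<alpha> - Var 0 * Var 2,
         Var 2 * Var 3 ^ (\<beta> - 1) - Var 1 * Var 4,
         Var 1 ^ (\<alpha> - 1) * Var 3 ^ (\<beta> - 1) - Var 0 * Var 4 })"
proof -
  obtain a k where p: "p = five_generators.modulus a k" and b: "b = five_generators.twist a k"
    and v: "int p - inv_modp p b = 2 * int a + 5"
    using parameters_from_hypotheses[OF assms] .
  interpret five_generators a k .
  have "nat ((int p - inv_modp p b + 1) div 2) = a + 3" "nat ((int p - b + 1) div 2) = k + 2"
    using v by (simp_all add: p b twist_def)
  moreover have "phi p b = eval_poly embed"
    by (rule ext) (simp only: p b phi_def inv_list_eq embed_def[abs_def])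
  then have "ker_phi p b = {P. in_vars 5 P \<and> eval_poly embed P = 0}"
    by (simp add: ker_phi_def p b card_inv_gens)
  ultimately show ?thesis
    using card_inv_gens unfolding p b kernel_eq_ideal_in binomials_def by simp
qed

end
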